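(* Let $q$ be a prime power and $u=(u_1,u_2,u_3)\in\mathbb{F}_q^3$. (1) If $\omega(u)=1$ and $\delta(u)=2$, then $|\widetilde{E}(u)|=0$. (2) If $\omega(u)=2$ and $\delta(u)=2$, then $|\widetilde{E}(u)|=0$. (3) If $\omega(u)=2$ and $\delta(u)=3$, then $|\widetilde{E}(u)|=(q-1)(q-3)$. (4) If $\omega(u)=3$ and $\delta(u)=1$, then $|\widetilde{E}(u)|=0$. (5) If $\omega(u)=3$ and $\delta(u)=2$, then $|\widetilde{E}(u)|=(q-1)(2q-6)$. (6) If $\omega(u)=3$ and $\delta(u)=3$, then $|\widetilde{E}(u)|=(q-1)(3q-11)$.
   Context: $\mathbb{F}_q$ is the finite field with $q$ elements. Hamming distance $d(u,v)=|\{i: u_i\ne v_i\}|$ on $\mathbb{F}_q^3$; $B(u)=\{v: d(u,v)\le1\}$; $E(u)=\bigcup_{\lambda\in\mathbb{F}_q}B(\lambda u)$. $\mathcal{D}_q=\{(u_1,u_2,u_3)\in\mathbb{F}_q^3 : u_1,u_2,u_3 \text{ pairwise distinct and nonzero}\}$ and $\widetilde{E}(u)=E(u)\cap\mathcal{D}_q$. The weight is $\omega(u)=|\{i: u_i\neq 0\}|$ and $\delta(u)=|\{u_1,u_2,u_3\}|$ is the number of distinct coordinate values. *)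

theory Defs
  imports Main
begin

type_synonym 'a vec3 = "'a \<times> 'a \<times> 'a"

fun coords :: "'a vec3 \<Rightarrow> 'a list" where
  "coords (a, b, c) = [a, b, c]"

definition hdist :: "'a vec3 \<Rightarrow> 'a vec3 \<Rightarrow> nat" where
  "hdist u v = card {i. i < 3 \<and> coords u ! i \<noteq> coords v ! i}"

definition hball :: "'a vec3 \<Rightarrow> 'a vec3 set" where
  "hball u = {v. hdist u v \<le> 1}"

definition smult3 :: "'a::times \<Rightarrow> 'a vec3 \<Rightarrow> 'a vec3" where
  "smult3 l u = (case u of (a, b, c) \<Rightarrow> (l * a, l * b, l * c))"

definition Eset :: "'a::field vec3 \<Rightarrow> 'a vec3 set" where
  "Eset u = (\<Union>l\<in>UNIV. hball (smult3 l u))"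

definition Dset :: "'a::field vec3 set" where
  "Dset = {(a, b, c). a \<noteq> 0 \<and> b \<noteq> 0 \<and> c \<noteq> 0 \<and> a \<noteq> b \<and> a \<noteq> c \<and> b \<noteq> c}"

definition Etilde :: "'a::field vec3 \<Rightarrow> 'a vec3 set" where
  "Etilde u = Eset u \<inter> Dset"

definition weight :: "'a::zero vec3 \<Rightarrow> nat" where
  "weight u = card {i. i < 3 \<and> coords u ! i \<noteq> 0}"

definition delta :: "'a vec3 \<Rightarrow> nat" where
  "delta u = card (set (coords u))"

end

theory Submission imports Defs begin

text \<open>Scaling by a nonzero \<open>\<lambda>\<close> is a Hamming isometry of \<open>F_q^3\<close> mapping \<open>D_q\<close> onto itself,
  so \<open>|B(\<lambda>u) \<inter> D_q| = |B(u) \<inter> D_q|\<close> for \<open>\<lambda> \<noteq> 0\<close>, while \<open>B(0)\<close> misses \<open>D_q\<close>. A point of \<open>D_q\<close>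
  within distance 1 of both \<open>\<lambda>u\<close> and \<open>\<mu>u\<close> agrees with both in some nonzero coordinate, which
  forces \<open>\<lambda> = \<mu>\<close>; hence \<open>|Etilde u| = (q - 1) |B(u) \<inter> D_q|\<close>. Finally \<open>B(u) \<inter> D_q\<close> splits into
  \<open>u\<close> itself and the three axis-parallel lines through \<open>u\<close>, each contributing \<open>q\<close> minus the number
  of forbidden values; evaluating this by the zero and coinciding coordinates of \<open>u\<close> gives the six
  values.\<close>

lemma card_less_3_filter:
  "card {i::nat. i < 3 \<and> P i} = (if P 0 then 1 else 0) + (if P 1 then 1 else 0) + (if P 2 then 1 else 0)"
proof -
  have split: "{i::nat. i < 3 \<and> P i} = {i. i = 0 \<and> P 0} \<union> {i. i = 1 \<and> P 1} \<union> {i. i = 2 \<and> P 2}"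
  proof (intro set_eqI iffI)
    fix i assume "i \<in> {i::nat. i < 3 \<and> P i}"
    then have "i = 0 \<or> i = 1 \<or> i = 2" "P i" by auto
    then show "i \<in> {i. i = 0 \<and> P 0} \<union> {i. i = 1 \<and> P 1} \<union> {i. i = 2 \<and> P 2}" by blast
  qed auto
  show ?thesis
    unfolding split by (cases "P 0"; cases "P 1"; cases "P 2") simp_all
qed

lemma hdist_eq:
  "hdist (a, b, c) (x, y, z) = (if a = x then 0 else 1) + (if b = y then 0 else 1) + (if c = z then 0 else 1)"
  unfolding hdist_def by (simp add: card_less_3_filter)

lemma weight_eq:
  "weight (a, b, c) = (if a = 0 then 0 else 1) + (if b = 0 then 0 else 1) + (if c = 0 then 0 else 1)"
  unfolding weight_def by (simp add: card_less_3_filter)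

lemma delta_eq: "delta (a, b, c) = card {a, b, c}"
  unfolding delta_def by simp

lemma smult3_eq: "smult3 l (a, b, c) = (l * a, l * b, l * c)"
  by (simp add: smult3_def)

lemma mem_hball_iff:
  "(x, y, z) \<in> hball (a, b, c) \<longleftrightarrow> (y = b \<and> z = c) \<or> (x = a \<and> z = c) \<or> (x = a \<and> y = b)"
  unfolding hball_def by (simp add: hdist_eq)

lemma mem_Dset_iff:
  "(x, y, z) \<in> Dset \<longleftrightarrow> x \<noteq> 0 \<and> y \<noteq> 0 \<and> z \<noteq> 0 \<and> x \<noteq> y \<and> x \<noteq> z \<and> y \<noteq> z"
  unfolding Dset_def by simp

lemma smult3_inverse:
  fixes v :: "'a::field vec3"
  assumes "l \<noteq> 0"
  shows "smult3 (inverse l) (smult3 l v) = v"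
  using assms by (cases v) (simp add: smult3_eq)

lemma smult3_mem_hball_iff:
  fixes u v :: "'a::field vec3"
  assumes "l \<noteq> 0"
  shows "smult3 l v \<in> hball (smult3 l u) \<longleftrightarrow> v \<in> hball u"
  using assms by (cases u; cases v) (simp add: smult3_eq mem_hball_iff)

lemma smult3_mem_Dset_iff:
  fixes v :: "'a::field vec3"
  assumes "l \<noteq> 0"
  shows "smult3 l v \<in> Dset \<longleftrightarrow> v \<in> Dset"
  using assms by (cases v) (simp add: smult3_eq mem_Dset_iff)

lemma hball_smult3_Int_Dset:
  fixes u :: "'a::field vec3"
  assumes "l \<noteq> 0"
  shows "hball (smult3 l u) \<inter> Dset = smult3 l ` (hball u \<inter> Dset)"
proof (intro set_eqI iffI)
  fix v assume v: "v \<in> hball (smult3 l u) \<inter> Dset"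
  define w where "w = smult3 (inverse l) v"
  have "v = smult3 l w"
    unfolding w_def using smult3_inverse[of "inverse l" v] assms by simp
  with v have "w \<in> hball u \<inter> Dset"
    using smult3_mem_hball_iff[OF assms] smult3_mem_Dset_iff[OF assms] by simp
  with \<open>v = smult3 l w\<close> show "v \<in> smult3 l ` (hball u \<inter> Dset)"
    by blast
next
  fix v assume "v \<in> smult3 l ` (hball u \<inter> Dset)"
  then obtain w where "v = smult3 l w" "w \<in> hball u" "w \<in> Dset"
    by blast
  then show "v \<in> hball (smult3 l u) \<inter> Dset"
    by (simp add: smult3_mem_hball_iff[OF assms] smult3_mem_Dset_iff[OF assms])
qed

lemma card_hball_smult3_Int_Dset:
  fixes u :: "'a::field vec3"
  assumes "l \<noteq> 0"
  shows "card (hball (smult3 l u) \<inter> Dset) = card (hball u \<inter> Dset)"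
proof -
  have "inj (smult3 l)"
    using smult3_inverse[OF assms] by (metis injI)
  then show ?thesis
    unfolding hball_smult3_Int_Dset[OF assms] by (simp add: card_image inj_on_subset)
qed

lemma hball_smult3_Int_Dset_disjoint:
  fixes u :: "'a::field vec3"
  assumes "l \<noteq> m"
  shows "(hball (smult3 l u) \<inter> Dset) \<inter> (hball (smult3 m u) \<inter> Dset) = {}"
proof (rule ccontr)
  assume "\<not> ?thesis"
  then obtain x y z where "(x, y, z) \<in> hball (smult3 l u) \<inter> Dset" "(x, y, z) \<in> hball (smult3 m u) \<inter> Dset"
    by auto
  moreover obtain a b c where "u = (a, b, c)"
    by (cases u)
  ultimately have "(x = l * a \<and> x = m * a \<and> x \<noteq> 0) \<or> (y = l * b \<and> y = m * b \<and> y \<noteq> 0)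
      \<or> (z = l * c \<and> z = m * c \<and> z \<noteq> 0)"
    by (auto simp: smult3_eq mem_hball_iff mem_Dset_iff)
  then show False
    using assms by auto
qed

lemma hball_zero_Int_Dset: "hball ((0, 0, 0) :: 'a::field vec3) \<inter> Dset = {}"
proof (rule equals0I)
  fix v assume "v \<in> hball (0, 0, 0) \<inter> Dset"
  then show False
    by (cases v) (auto simp: mem_hball_iff mem_Dset_iff)
qed

lemma Etilde_eq_UN_nonzero:
  fixes u :: "'a::field vec3"
  shows "Etilde u = (\<Union>l \<in> - {0}. hball (smult3 l u) \<inter> Dset)"
proof -
  have "smult3 0 u = (0, 0, 0)"
    by (cases u) (simp add: smult3_eq)
  then have empty: "hball (smult3 0 u) \<inter> Dset = {}"
    by (simp only: hball_zero_Int_Dset)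
  have "UNIV = insert 0 (- {0 :: 'a})"
    by auto
  then have "Etilde u = (\<Union>l \<in> insert 0 (- {0}). hball (smult3 l u) \<inter> Dset)"
    unfolding Etilde_def Eset_def by (simp only: UN_extend_simps(4))
  then show ?thesis
    by (simp only: UN_insert empty Un_empty_left)
qed

lemma card_Etilde_eq:
  fixes u :: "'a::{field,finite} vec3"
  shows "card (Etilde u) = (card (UNIV :: 'a set) - 1) * card (hball u \<inter> Dset)"
proof -
  have "card (Etilde u) = (\<Sum>l \<in> - {0::'a}. card (hball (smult3 l u) \<inter> Dset))"
    unfolding Etilde_eq_UN_nonzero
    by (rule card_UN_disjoint) (simp_all add: hball_smult3_Int_Dset_disjoint)
  also have "\<dots> = (\<Sum>l \<in> - {0::'a}. card (hball u \<inter> Dset))"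
    by (simp add: card_hball_smult3_Int_Dset)
  also have "\<dots> = (card (UNIV :: 'a set) - 1) * card (hball u \<inter> Dset)"
    by (simp add: Compl_eq_Diff_UNIV card_Diff_singleton)
  finally show ?thesis .
qed

lemma card_Collect_not_mem_and:
  "card {x :: 'a::finite. x \<notin> A \<and> P} = (if P then card (UNIV :: 'a set) - card A else 0)"
  by (cases P) (simp_all add: Collect_neg_eq Compl_eq_Diff_UNIV card_Diff_subset)

lemma card_hball_Int_Dset:
  fixes a b c :: "'a::{field,finite}"
  shows "card (hball (a, b, c) \<inter> Dset) = (if (a, b, c) \<in> Dset then 1 else 0)
    + (if b \<noteq> 0 \<and> c \<noteq> 0 \<and> b \<noteq> c then card (UNIV :: 'a set) - card {a, 0, b, c} else 0)
    + (if a \<noteq> 0 \<and> c \<noteq> 0 \<and> a \<noteq> c then card (UNIV :: 'a set) - card {b, 0, a, c} else 0)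
    + (if a \<noteq> 0 \<and> b \<noteq> 0 \<and> a \<noteq> b then card (UNIV :: 'a set) - card {c, 0, a, b} else 0)"
proof -
  define L1 where "L1 = (\<lambda>x. (x, b, c)) ` {x. x \<notin> {a, 0, b, c} \<and> b \<noteq> 0 \<and> c \<noteq> 0 \<and> b \<noteq> c}"
  define L2 where "L2 = (\<lambda>y. (a, y, c)) ` {y. y \<notin> {b, 0, a, c} \<and> a \<noteq> 0 \<and> c \<noteq> 0 \<and> a \<noteq> c}"
  define L3 where "L3 = (\<lambda>z. (a, b, z)) ` {z. z \<notin> {c, 0, a, b} \<and> a \<noteq> 0 \<and> b \<noteq> 0 \<and> a \<noteq> b}"
  have split: "hball (a, b, c) \<inter> Dset = ({(a, b, c)} \<inter> Dset) \<union> (L1 \<union> (L2 \<union> L3))"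
    by (auto simp: L1_def L2_def L3_def mem_hball_iff mem_Dset_iff)
  have disjoint: "({(a, b, c)} \<inter> Dset) \<inter> (L1 \<union> (L2 \<union> L3)) = {}" "L1 \<inter> (L2 \<union> L3) = {}" "L2 \<inter> L3 = {}"
    by (auto simp: L1_def L2_def L3_def)
  have "card L1 = (if b \<noteq> 0 \<and> c \<noteq> 0 \<and> b \<noteq> c then card (UNIV :: 'a set) - card {a, 0, b, c} else 0)"
       "card L2 = (if a \<noteq> 0 \<and> c \<noteq> 0 \<and> a \<noteq> c then card (UNIV :: 'a set) - card {b, 0, a, c} else 0)"
       "card L3 = (if a \<noteq> 0 \<and> b \<noteq> 0 \<and> a \<noteq> b then card (UNIV :: 'a set) - card {c, 0, a, b} else 0)"
    unfolding L1_def L2_def L3_def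
    by (subst card_image, simp add: inj_on_def, rule card_Collect_not_mem_and)+
  then show ?thesis
    unfolding split by (simp add: card_Un_disjoint disjoint)
qed

lemma int_card_hball_Int_Dset:
  fixes a b c :: "'a::{field,finite}"
  defines "q \<equiv> int (card (UNIV :: 'a set))"
  shows "int (card (hball (a, b, c) \<inter> Dset)) = (if (a, b, c) \<in> Dset then 1 else 0)
    + (if b \<noteq> 0 \<and> c \<noteq> 0 \<and> b \<noteq> c then q - int (card {a, 0, b, c}) else 0)
    + (if a \<noteq> 0 \<and> c \<noteq> 0 \<and> a \<noteq> c then q - int (card {b, 0, a, c}) else 0)
    + (if a \<noteq> 0 \<and> b \<noteq> 0 \<and> a \<noteq> b then q - int (card {c, 0, a, b}) else 0)"
proof -
  have "int (card (UNIV :: 'a set) - card A) = q - int (card A)" for A :: "'a set"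
    unfolding q_def by (simp add: of_nat_diff card_mono)
  then show ?thesis
    unfolding card_hball_Int_Dset by (simp only: of_nat_add of_nat_0 of_nat_1 if_distrib[of int])
qed

lemma card_hball_Int_Dset_by_type:
  fixes u :: "'a::{field,finite} vec3"
  defines "q \<equiv> int (card (UNIV :: 'a set))"
  shows "(weight u = 1 \<and> delta u = 2 \<longrightarrow> int (card (hball u \<inter> Dset)) = 0)
       \<and> (weight u = 2 \<and> delta u = 2 \<longrightarrow> int (card (hball u \<inter> Dset)) = 0)
       \<and> (weight u = 2 \<and> delta u = 3 \<longrightarrow> int (card (hball u \<inter> Dset)) = q - 3)
       \<and> (weight u = 3 \<and> delta u = 1 \<longrightarrow> int (card (hball u \<inter> Dset)) = 0)
       \<and> (weight u = 3 \<and> delta u = 2 \<longrightarrow> int (card (hball u \<inter> Dset)) = 2 * q - 6)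
       \<and> (weight u = 3 \<and> delta u = 3 \<longrightarrow> int (card (hball u \<inter> Dset)) = 3 * q - 11)"
proof -
  obtain a b c where u: "u = (a, b, c)"
    by (cases u)
  show ?thesis
    unfolding u q_def int_card_hball_Int_Dset weight_eq delta_eq
    by (cases "a = 0"; cases "b = 0"; cases "c = 0"; cases "a = b"; cases "a = c"; cases "b = c")
       (simp_all add: mem_Dset_iff card_insert_if)
qed

theorem theorem5:
  fixes u :: "'a::{field,finite} vec3"
  defines "q \<equiv> int (card (UNIV :: 'a set))"
  shows "(weight u = 1 \<and> delta u = 2 \<longrightarrow> card (Etilde u) = 0)
       \<and> (weight u = 2 \<and> delta u = 2 \<longrightarrow> card (Etilde u) = 0)
       \<and> (weight u = 2 \<and> delta u = 3 \<longrightarrow> int (card (Etilde u)) = (q - 1) * (q - 3))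
       \<and> (weight u = 3 \<and> delta u = 1 \<longrightarrow> card (Etilde u) = 0)
       \<and> (weight u = 3 \<and> delta u = 2 \<longrightarrow> int (card (Etilde u)) = (q - 1) * (2 * q - 6))
       \<and> (weight u = 3 \<and> delta u = 3 \<longrightarrow> int (card (Etilde u)) = (q - 1) * (3 * q - 11))"
proof -
  have "int (card (Etilde u)) = (q - 1) * int (card (hball u \<inter> Dset))"
    unfolding card_Etilde_eq q_def by (simp add: of_nat_diff Suc_le_eq card_gt_0_iff)
  then show ?thesis
    using card_hball_Int_Dset_by_type[of u] unfolding q_def by auto
qed

end
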